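(* Let $k$ be a positive integer and let $G$ be a finite graph. If $G$ has a $k$-prime product distance labeling, then $G$ is $2^{k+1}$-colorable.
   Context: A $k$-prime product distance labeling of a graph $G$ is an injective map $L:V(G)\to\mathbb{Z}$ such that $|L(u)-L(v)|>1$ for all distinct vertices $u,v$ of $G$, and such that for every pair of adjacent vertices $u,v$ the integer $|L(u)-L(v)|$ has at most $k$ prime factors counted with multiplicity. A graph is $m$-colorable if its vertices can be colored with $m$ colors so that adjacent vertices receive different colors. *)

theory Defs
  imports Main "HOL-Computational_Algebra.Primes" "HOL-Library.Multiset"
begin

definition simple_graph :: "'a set \<Rightarrow> ('a \<Rightarrow> 'a \<Rightarrow> bool) \<Rightarrow> bool" where
  "simple_graph V E \<longleftrightarrow> finite V \<and> (\<forall>u v. E u v \<longrightarrow> u \<in> V \<and> v \<in> V) \<and>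
     (\<forall>u v. E u v \<longrightarrow> E v u) \<and> (\<forall>v. \<not> E v v)"

definition num_prime_factors :: "nat \<Rightarrow> nat" where
  "num_prime_factors n = size (prime_factorization n)"

definition prime_product_distance_labeling ::
  "nat \<Rightarrow> 'a set \<Rightarrow> ('a \<Rightarrow> 'a \<Rightarrow> bool) \<Rightarrow> ('a \<Rightarrow> int) \<Rightarrow> bool" where
  "prime_product_distance_labeling k V E L \<longleftrightarrow>
     inj_on L V \<and>
     (\<forall>u\<in>V. \<forall>v\<in>V. u \<noteq> v \<longrightarrow> \<bar>L u - L v\<bar> > 1) \<and>
     (\<forall>u\<in>V. \<forall>v\<in>V. E u v \<longrightarrow> num_prime_factors (nat \<bar>L u - L v\<bar>) \<le> k)"

definition colorable :: "nat \<Rightarrow> 'a set \<Rightarrow> ('a \<Rightarrow> 'a \<Rightarrow> bool) \<Rightarrow> bool" where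
  "colorable m V E \<longleftrightarrow>
     (\<exists>c :: 'a \<Rightarrow> nat. (\<forall>v\<in>V. c v < m) \<and> (\<forall>u\<in>V. \<forall>v\<in>V. E u v \<longrightarrow> c u \<noteq> c v))"

end

theory Submission
  imports Defs
begin

text \<open>Colour each vertex by the residue of its label modulo \<open>2^(k+1)\<close>. If two adjacent
vertices received the same colour, \<open>2^(k+1)\<close> would divide the distance of their labels,
which is nonzero, so this distance would have at least \<open>k + 1\<close> prime factors.\<close>

lemma num_prime_factors_prime_power:
  fixes p :: nat
  assumes "prime p"
  shows "num_prime_factors (p ^ n) = n"
  using assms by (simp add: num_prime_factors_def prime_factorization_prime_power)

lemma num_prime_factors_dvd_mono:
  fixes m n :: nat
  assumes "n dvd m" and "m \<noteq> 0"
  shows "num_prime_factors n \<le> num_prime_factors m"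
proof -
  have "n \<noteq> 0"
    using assms by auto
  with assms have "prime_factorization n \<subseteq># prime_factorization m"
    by (simp add: prime_factorization_subset_iff_dvd)
  then show ?thesis
    unfolding num_prime_factors_def by (rule size_mset_mono)
qed

lemma colorable_by_residues:
  fixes L :: "'a \<Rightarrow> int" and M :: nat
  assumes "M > 0"
    and "\<And>u v. u \<in> V \<Longrightarrow> v \<in> V \<Longrightarrow> E u v \<Longrightarrow> \<not> int M dvd L u - L v"
  shows "colorable M V E"
  unfolding colorable_def
proof (intro exI conjI ballI impI)
  let ?c = "\<lambda>v. nat (L v mod int M)"
  show "?c v < M" for v
    using assms(1) by (simp add: nat_less_iff)
  fix u v
  assume "u \<in> V" "v \<in> V" "E u v"
  then have "L u mod int M \<noteq> L v mod int M"
    using assms(2) by (simp add: mod_eq_dvd_iff)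
  then show "?c u \<noteq> ?c v"
    using assms(1) by (simp add: nat_eq_iff)
qed

lemma prime_product_distance_labeling_adjacent_not_dvd:
  assumes "simple_graph V E"
    and "prime_product_distance_labeling k V E L"
    and "u \<in> V" "v \<in> V" "E u v"
  shows "\<not> 2 ^ (k + 1) dvd L u - L v"
proof
  assume "2 ^ (k + 1) dvd L u - L v"
  then have "int (2 ^ (k + 1)) dvd \<bar>L u - L v\<bar>"
    by simp
  then have dvd: "2 ^ (k + 1) dvd nat \<bar>L u - L v\<bar>"
    by (metis abs_ge_zero nat_0_le of_nat_dvd_iff)
  have "u \<noteq> v"
    using assms(1,5) unfolding simple_graph_def by blast
  then have "nat \<bar>L u - L v\<bar> \<noteq> 0"
    using assms(2-4) unfolding prime_product_distance_labeling_def by fastforce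
  then have "num_prime_factors (2 ^ (k + 1)) \<le> num_prime_factors (nat \<bar>L u - L v\<bar>)"
    by (rule num_prime_factors_dvd_mono[OF dvd])
  then have "k + 1 \<le> num_prime_factors (nat \<bar>L u - L v\<bar>)"
    using num_prime_factors_prime_power[of 2 "k + 1"] by simp
  moreover have "num_prime_factors (nat \<bar>L u - L v\<bar>) \<le> k"
    using assms(2-5) unfolding prime_product_distance_labeling_def by blast
  ultimately show False
    by simp
qed

theorem mainTheorem1:
  fixes V :: "'a set" and E :: "'a \<Rightarrow> 'a \<Rightarrow> bool" and k :: nat
  assumes "k \<ge> 1"
    and "simple_graph V E"
    and "\<exists>L. prime_product_distance_labeling k V E L"
  shows "colorable (2 ^ (k + 1)) V E"
proof -
  obtain L where L: "prime_product_distance_labeling k V E L"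
    using assms(3) by blast
  show ?thesis
  proof (rule colorable_by_residues)
    show "\<not> int (2 ^ (k + 1)) dvd L u - L v" if "u \<in> V" "v \<in> V" "E u v" for u v
      using prime_product_distance_labeling_adjacent_not_dvd[OF assms(2) L that] by simp
  qed simp
qed

end
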